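(* Let $Z$ be a non-negative random variable satisfying $\mathbb{E}[Z^2]=1$. Then \[ \mathbb{E}\left[Z^2\,\frac{[Z-1/2]_+^2}{(Z+1/2)^2}\right]\ge \frac{1}{53}. \]
   Context: For $x\in\mathbb{R}$, $[x]_+=\max\{0,x\}$. *)

theory Defs
  imports "HOL-Probability.Probability"
begin

definition pos_part :: "real \<Rightarrow> real" where
  "pos_part x = max 0 x"

end

theory Submission
  imports Defs
begin

text \<open>For \<open>z \<ge> 0\<close> the integrand is bounded below by the affine function \<open>z\<^sup>2/8 - 1/16\<close> of \<open>z\<^sup>2\<close>
  (for \<open>z \<ge> 1/2\<close> this is a quartic polynomial inequality; for \<open>z < 1/2\<close> the bound is negative).
  Taking expectations and using \<open>E[Z\<^sup>2] = 1\<close> gives the lower bound \<open>1/16 \<ge> 1/53\<close>; integrability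
  comes from the integrand being at most \<open>Z\<^sup>2\<close>.\<close>

lemma quartic_le_sq_mul_sq:
  fixes z :: real
  assumes "z \<ge> 0"
  shows "(2*z\<^sup>2 - 1) * (z + 1/2)\<^sup>2 \<le> 16*z\<^sup>2 * (z - 1/2)\<^sup>2"
proof -
  \<comment> \<open>sum-of-squares certificate, with linear and constant remainders nonnegative for \<open>z \<ge> 0\<close>\<close>
  have "16*z\<^sup>2 * (z - 1/2)\<^sup>2 - (2*z\<^sup>2 - 1) * (z + 1/2)\<^sup>2
      = 14 * (z\<^sup>2 - 9/14*z - 9/196)\<^sup>2 + 34/196 * z + (1/4 - 14*81/196\<^sup>2)"
    by (simp add: algebra_simps power2_eq_square)
  moreover have "0 \<le> 14 * (z\<^sup>2 - 9/14*z - 9/196)\<^sup>2 + 34/196 * z + (1/4 - 14*81/196\<^sup>2)"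
    using assms by simp
  ultimately show ?thesis by linarith
qed

lemma sq_mul_pos_part_ratio_ge:
  fixes z :: real
  assumes "z \<ge> 0"
  shows "z\<^sup>2/8 - 1/16 \<le> z\<^sup>2 * (pos_part (z - 1/2))\<^sup>2 / (z + 1/2)\<^sup>2"
proof (cases "z \<ge> 1/2")
  case True
  have denom_pos: "(z + 1/2)\<^sup>2 > 0"
    using assms by simp
  have "z\<^sup>2/8 - 1/16 = (2*z\<^sup>2 - 1) * (z + 1/2)\<^sup>2 / 16 / (z + 1/2)\<^sup>2"
    using denom_pos by (simp add: field_simps)
  also have "\<dots> \<le> 16*z\<^sup>2 * (z - 1/2)\<^sup>2 / 16 / (z + 1/2)\<^sup>2"
    using quartic_le_sq_mul_sq[OF assms] denom_pos by (intro divide_right_mono) auto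
  finally show ?thesis
    using True by (simp add: pos_part_def)
next
  case False
  then have "z\<^sup>2 \<le> (1/2)\<^sup>2"
    using assms by (intro power_mono) auto
  then have "z\<^sup>2/8 - 1/16 \<le> 0"
    by (simp add: power2_eq_square)
  also have "0 \<le> z\<^sup>2 * (pos_part (z - 1/2))\<^sup>2 / (z + 1/2)\<^sup>2"
    by simp
  finally show ?thesis .
qed

lemma sq_mul_pos_part_ratio_le_sq:
  fixes z :: real
  shows "\<bar>z\<^sup>2 * (pos_part (z - 1/2))\<^sup>2 / (z + 1/2)\<^sup>2\<bar> \<le> z\<^sup>2"
proof (cases "z \<ge> 1/2")
  case True
  have "(z - 1/2)\<^sup>2 \<le> (z + 1/2)\<^sup>2"
    using True by (intro power_mono) auto
  then have "(z - 1/2)\<^sup>2 / (z + 1/2)\<^sup>2 \<le> 1"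
    using True by simp
  then have "z\<^sup>2 * ((z - 1/2)\<^sup>2 / (z + 1/2)\<^sup>2) \<le> z\<^sup>2 * 1"
    by (intro mult_left_mono) auto
  then show ?thesis
    using True by (simp add: pos_part_def)
next
  case False
  then show ?thesis
    by (simp add: pos_part_def)
qed

theorem lemma2:
  fixes M :: "'a measure" and Z :: "'a \<Rightarrow> real"
  assumes "prob_space M"
    and "Z \<in> borel_measurable M"
    and "AE x in M. Z x \<ge> 0"
    and "integrable M (\<lambda>x. (Z x)\<^sup>2)"
    and "(\<integral>x. (Z x)\<^sup>2 \<partial>M) = 1"
  shows "(\<integral>x. (Z x)\<^sup>2 * (pos_part (Z x - 1/2))\<^sup>2 / (Z x + 1/2)\<^sup>2 \<partial>M) \<ge> 1/53"
proof -
  interpret prob_space M by fact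
  let ?f = "\<lambda>x. (Z x)\<^sup>2 * (pos_part (Z x - 1/2))\<^sup>2 / (Z x + 1/2)\<^sup>2"
  have "?f \<in> borel_measurable M"
    using assms(2) unfolding pos_part_def by measurable
  then have integrable_f: "integrable M ?f"
    by (rule Bochner_Integration.integrable_bound[OF assms(4)]) (use sq_mul_pos_part_ratio_le_sq in auto)
  have "(\<integral>x. (Z x)\<^sup>2/8 - 1/16 \<partial>M) = 1/16"
    using assms(4,5) by (simp add: prob_space)
  moreover have "(\<integral>x. (Z x)\<^sup>2/8 - 1/16 \<partial>M) \<le> (\<integral>x. ?f x \<partial>M)"
    using assms(3,4) integrable_f
    by (intro integral_mono_AE) (auto elim!: AE_mp intro: sq_mul_pos_part_ratio_ge)
  ultimately show ?thesis
    by linarith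
qed

end
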